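(* Let $(\mathcal{X},\rho)$ be a separable metric space with Borel $\sigma$-algebra $\mathcal{B}$, and let $\mathbb{X}$ be a process satisfying condition $\mathrm{FMV}$. Then for any $\delta,\varepsilon>0$ and $m_0\in\mathbb{N}$ there exist $M\in\mathbb{N}$ with $M\ge m_0$ and sets $G_1,\dots,G_M\in\mathcal{B}$ that are pairwise disjoint, each satisfying $\sup_{x,x'\in G_i}\rho(x,x')\le\delta$, and such that $\mathbb{P}\big(\exists t:\ X_t\in\mathcal{X}\setminus\bigcup_{i=1}^M G_i\big)<\varepsilon$.
   Context: $\mathrm{FMV}$: the set of processes $\mathbb{X}=(X_t)_{t\ge1}$ in $\mathcal{X}$ such that for every countable partition $\{A_k\}_{k\ge1}$ of $\mathcal{X}$ into sets of $\mathcal{B}$, almost surely $\#\{k:\exists t,\ X_t\in A_k\}<\infty$. *)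

theory Defs
  imports "HOL-Probability.Probability"
begin

definition separable_space :: "'a::metric_space itself \<Rightarrow> bool" where
  "separable_space _ \<longleftrightarrow> (\<exists>D::'a set. countable D \<and> closure D = UNIV)"

definition FMV :: "'w measure \<Rightarrow> (nat \<Rightarrow> 'w \<Rightarrow> 'a::metric_space) \<Rightarrow> bool" where
  "FMV P X \<longleftrightarrow>
     (\<forall>A::nat \<Rightarrow> 'a set.
        (\<forall>k\<ge>1. A k \<in> sets borel) \<and> disjoint_family_on A {1..} \<and> (\<Union>k\<in>{1..}. A k) = UNIV
        \<longrightarrow> (AE \<omega> in P. finite {k. k \<ge> 1 \<and> (\<exists>t\<ge>1. X t \<omega> \<in> A k)}))"

end

theory Submission
  imports Defs
begin

text \<open>Cover the space by countably many balls of radius \<open>\<delta>/2\<close> centred at a dense sequence and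
  disjointify them; this gives a Borel partition \<open>A\<^sub>1, A\<^sub>2, \<dots>\<close> into sets of diameter at most \<open>\<delta>\<close>.
  By FMV, almost every trajectory meets only finitely many \<open>A\<^sub>k\<close>, so the events "some \<open>X\<^sub>t\<close> lies
  outside \<open>A\<^sub>1 \<union> \<dots> \<union> A\<^sub>N\<close>" decrease to a null set, and their probabilities tend to \<open>0\<close>.\<close>

lemma separable_space_ball_cover:
  assumes "separable_space TYPE('a::metric_space)" and "r > 0"
  obtains c :: "nat \<Rightarrow> 'a::metric_space" where "(\<Union>n. ball (c n) r) = UNIV"
proof -
  obtain D :: "'a set" where D: "countable D" "closure D = UNIV"
    using assms(1) unfolding separable_space_def by blast
  have "x \<in> (\<Union>n. ball (from_nat_into D n) r)" for x
  proof -
    have "x \<in> closure D"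
      using D(2) by simp
    then obtain y where "y \<in> D" "dist y x < r"
      using \<open>r > 0\<close> unfolding closure_approachable by blast
    then show ?thesis
      using from_nat_into_surj[OF D(1)] by (fastforce simp: dist_commute)
  qed
  then show thesis
    by (intro that[of "from_nat_into D"]) blast
qed

lemma separable_space_small_Borel_partition:
  assumes "separable_space TYPE('a::metric_space)" and "\<delta> > 0"
  obtains G :: "nat \<Rightarrow> 'a::metric_space set"
  where "\<And>k. G k \<in> sets borel" and "disjoint_family_on G {1..}"
    and "(\<Union>k\<in>{1..}. G k) = UNIV"
    and "\<And>k x x'. x \<in> G k \<Longrightarrow> x' \<in> G k \<Longrightarrow> dist x x' \<le> \<delta>"
proof -
  obtain c :: "nat \<Rightarrow> 'a" where balls_cover: "(\<Union>n. ball (c n) (\<delta> / 2)) = UNIV"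
    using separable_space_ball_cover[OF assms(1)] \<open>\<delta> > 0\<close> by (metis half_gt_zero)
  define B where "B n = ball (c n) (\<delta> / 2)" for n
  \<comment> \<open>shifted by one, since FMV indexes partitions from \<open>1\<close>\<close>
  define G where "G k = disjointed B (k - 1)" for k
  have "range B \<subseteq> sets borel"
    unfolding B_def by auto
  then have G_borel: "G k \<in> sets borel" for k
    unfolding G_def using sets.range_disjointed_sets by blast
  have G_disjoint: "disjoint_family_on G {1..}"
    unfolding disjoint_family_on_def
  proof (intro ballI impI)
    fix m n :: nat assume "m \<in> {1..}" "n \<in> {1..}" "m \<noteq> n"
    then have "m - 1 \<noteq> n - 1"
      by auto
    then show "G m \<inter> G n = {}"
      using disjoint_family_disjointed[of B] unfolding G_def disjoint_family_on_def by blast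
  qed
  have "(\<Union>k\<in>{1..}. G k) = (\<Union>n. disjointed B n)"
    unfolding G_def by (force intro: image_eqI[of _ _ "Suc _"])
  then have G_cover: "(\<Union>k\<in>{1..}. G k) = UNIV"
    using balls_cover by (simp add: UN_disjointed_eq B_def)
  have G_diameter: "dist x x' \<le> \<delta>" if "x \<in> G k" "x' \<in> G k" for k x x'
  proof -
    have "dist x (c (k - 1)) < \<delta> / 2" "dist x' (c (k - 1)) < \<delta> / 2"
      using that disjointed_subset[of B "k - 1"] by (auto simp: G_def B_def dist_commute)
    then show ?thesis
      using dist_triangle_half_l by fastforce
  qed
  show thesis
    by (rule that[OF G_borel G_disjoint G_cover G_diameter])
qed

lemma (in prob_space) FMV_escape_probability_tendsto_0:
  fixes X :: "nat \<Rightarrow> 'a \<Rightarrow> 'b::metric_space" and A :: "nat \<Rightarrow> 'b set"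
  assumes X: "\<And>t. t \<ge> 1 \<Longrightarrow> X t \<in> borel_measurable M"
    and "FMV M X"
    and A: "\<And>k. k \<ge> 1 \<Longrightarrow> A k \<in> sets borel"
    and "disjoint_family_on A {1..}" and cover: "(\<Union>k\<in>{1..}. A k) = UNIV"
  shows "(\<lambda>N. prob {\<omega> \<in> space M. \<exists>t\<ge>1. X t \<omega> \<notin> (\<Union>i\<in>{1..N}. A i)}) \<longlonglongrightarrow> 0"
proof -
  define escape where "escape N = {\<omega> \<in> space M. \<exists>t\<ge>1. X t \<omega> \<notin> (\<Union>i\<in>{1..N}. A i)}" for N
  have escape_events: "escape N \<in> events" for N
  proof -
    have "escape N = (\<Union>t\<in>{1..}. X t -` (- (\<Union>i\<in>{1..N}. A i)) \<inter> space M)"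
      unfolding escape_def by auto
    moreover have "- (\<Union>i\<in>{1..N}. A i) \<in> sets borel"
      using A by (intro borel_comp sets.finite_UN) auto
    ultimately show ?thesis
      using X by (auto intro!: sets.countable_UN' measurable_sets)
  qed
  have "AE \<omega> in M. finite {k. k \<ge> 1 \<and> (\<exists>t\<ge>1. X t \<omega> \<in> A k)}"
    using \<open>FMV M X\<close> A \<open>disjoint_family_on A {1..}\<close> cover unfolding FMV_def by blast
  then obtain null where null: "null \<in> null_sets M"
    and infinite_in_null: "{\<omega> \<in> space M. infinite {k. k \<ge> 1 \<and> (\<exists>t\<ge>1. X t \<omega> \<in> A k)}} \<subseteq> null"
    by (auto elim!: AE_E)
  have "(\<Inter>N. escape N) \<subseteq> null"
  proof
    fix \<omega> assume \<omega>: "\<omega> \<in> (\<Inter>N. escape N)"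
    have "\<exists>k>N. k \<ge> 1 \<and> (\<exists>t\<ge>1. X t \<omega> \<in> A k)" for N
    proof -
      obtain t where "t \<ge> 1" "X t \<omega> \<notin> (\<Union>i\<in>{1..N}. A i)"
        using \<omega> unfolding escape_def by blast
      moreover obtain k where "k \<ge> 1" "X t \<omega> \<in> A k"
        using cover by blast
      ultimately show ?thesis
        by (intro exI[of _ k]) (auto simp: not_less[symmetric])
    qed
    then have "infinite {k. k \<ge> 1 \<and> (\<exists>t\<ge>1. X t \<omega> \<in> A k)}"
      unfolding infinite_nat_iff_unbounded by blast
    with \<omega> infinite_in_null show "\<omega> \<in> null"
      unfolding escape_def by blast
  qed
  moreover have "(\<Inter>N. escape N) \<in> events"
    using escape_events by (intro sets.countable_INT) auto
  ultimately have "(\<Inter>N. escape N) \<in> null_sets M"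
    by (rule null_sets_subset[OF null, rotated])
  then have "prob (\<Inter>N. escape N) = 0"
    by (rule measure_eq_0_null_sets)
  moreover have "decseq escape"
    unfolding decseq_def
  proof (intro allI impI)
    fix m n :: nat assume "m \<le> n"
    then have "(\<Union>i\<in>{1..m}. A i) \<subseteq> (\<Union>i\<in>{1..n}. A i)"
      by (intro UN_mono) auto
    then show "escape n \<subseteq> escape m"
      unfolding escape_def by blast
  qed
  then have "(\<lambda>N. prob (escape N)) \<longlonglongrightarrow> prob (\<Inter>N. escape N)"
    using escape_events by (intro finite_Lim_measure_decseq) blast
  ultimately show ?thesis
    unfolding escape_def by simp
qed

theorem lemma9:
  fixes P :: "'w measure" and X :: "nat \<Rightarrow> 'w \<Rightarrow> 'a::metric_space"
    and \<delta> \<epsilon> :: real and m0 :: nat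
  assumes "separable_space TYPE('a)"
    and "prob_space P"
    and "\<And>t. t \<ge> 1 \<Longrightarrow> X t \<in> borel_measurable P"
    and "FMV P X"
    and "\<delta> > 0" and "\<epsilon> > 0"
  shows "\<exists>M::nat. M \<ge> m0 \<and> (\<exists>G::nat \<Rightarrow> 'a set.
           (\<forall>i\<in>{1..M}. G i \<in> sets borel) \<and>
           disjoint_family_on G {1..M} \<and>
           (\<forall>i\<in>{1..M}. \<forall>x\<in>G i. \<forall>x'\<in>G i. dist x x' \<le> \<delta>) \<and>
           measure P {\<omega> \<in> space P. \<exists>t\<ge>1. X t \<omega> \<in> UNIV - (\<Union>i\<in>{1..M}. G i)} < \<epsilon>)"
proof -
  interpret prob_space P by fact
  obtain G :: "nat \<Rightarrow> 'a set" where G_borel: "\<And>k. G k \<in> sets borel" and G_disjoint: "disjoint_family_on G {1..}"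
    and G_cover: "(\<Union>k\<in>{1..}. G k) = UNIV"
    and G_diameter: "\<And>k x x'. x \<in> G k \<Longrightarrow> x' \<in> G k \<Longrightarrow> dist x x' \<le> \<delta>"
    using separable_space_small_Borel_partition[OF assms(1,5)] by blast
  obtain N where N: "\<And>n. n \<ge> N \<Longrightarrow>
      prob {\<omega> \<in> space P. \<exists>t\<ge>1. X t \<omega> \<notin> (\<Union>i\<in>{1..n}. G i)} < \<epsilon>"
    using order_tendstoD(2)[OF FMV_escape_probability_tendsto_0[OF assms(3,4) G_borel
          G_disjoint G_cover] \<open>\<epsilon> > 0\<close>]
    unfolding eventually_sequentially by blast
  show ?thesis
    using N[of "max N m0"] G_borel G_diameter disjoint_family_on_mono[OF _ G_disjoint]
    by (intro exI[of _ "max N m0"] conjI exI[of _ G]) auto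
qed

end
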